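(* Let $\mathbf{i}=(i_1,\dots,i_r)$, $\mathbf{j}=(j_1,\dots,j_r)$ be sequences of positive integers with equal sums $N$, and suppose $g=\det M(\mathbf{i};\mathbf{j})$ is nonzero and irreducible. Then every indeterminate in each of the blocks $A^k$, $k=1,\dots,r$, appears in the top homogeneous component of $g$.
   Context: $M(\mathbf{i};\mathbf{j})$ is the $N\times N$ matrix whose rows are divided into blocks of sizes $i_1,\dots,i_r$ (top to bottom) and columns into blocks of sizes $j_r,\dots,j_1$ (left to right; the block of size $j_t$ is column block $t$). Row block $s$ has an $i_s\times j_s$ matrix $A^s$ of indeterminates in column block $s$; for $s\ge 2$ the matrix $I_{i_s,j_{s-1}}$ in column block $s-1$; zeros in column blocks $t<s-1$; and indeterminates in column blocks $t>s$. $I_{c,d}$ is the $c\times d$ matrix with $1$s on its main diagonal and $0$s elsewhere. All indeterminates are distinct. The top homogeneous component of a polynomial is its homogeneous component of highest degree. *)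

theory Defs
  imports "HOL-Library.Poly_Mapping" "HOL-Computational_Algebra.Factorial_Ring"
    "Jordan_Normal_Form.Determinant"
begin

text \<open>Multivariate polynomials over a field, with indeterminates indexed by matrix
  positions (row, column) (0-based).\<close>

type_synonym 'a mpol = "((nat \<times> nat) \<Rightarrow>\<^sub>0 nat) \<Rightarrow>\<^sub>0 'a"

definition Var :: "nat \<times> nat \<Rightarrow> 'a::comm_ring_1 mpol" where
  "Var x = Poly_Mapping.single (Poly_Mapping.single x 1) 1"

definition mon_deg :: "((nat \<times> nat) \<Rightarrow>\<^sub>0 nat) \<Rightarrow> nat" where
  "mon_deg m = (\<Sum>x\<in>Poly_Mapping.keys m. Poly_Mapping.lookup m x)"

definition total_degree :: "'a::zero mpol \<Rightarrow> nat" where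
  "total_degree p = Max (insert 0 (mon_deg ` Poly_Mapping.keys p))"

text \<open>The top homogeneous component of p is the sum of the terms of p whose monomial has
  degree total_degree p; its support (set of monomials) is top_support p. An indeterminate
  x appears in the top homogeneous component iff some monomial of that support has
  positive exponent at x.\<close>
definition top_support :: "'a::zero mpol \<Rightarrow> ((nat \<times> nat) \<Rightarrow>\<^sub>0 nat) set" where
  "top_support p = {m \<in> Poly_Mapping.keys p. mon_deg m = total_degree p}"

definition appears_in_top :: "nat \<times> nat \<Rightarrow> 'a::zero mpol \<Rightarrow> bool" where
  "appears_in_top x p \<longleftrightarrow> (\<exists>m\<in>top_support p. Poly_Mapping.lookup m x > 0)"

text \<open>Block structure. \<open>is\<close> = [i_1,...,i_r], \<open>js\<close> = [j_1,...,j_r].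
  Row block s (1-based) occupies rows sum(take (s-1) is) ..< sum(take s is).
  Column block t (1-based) has size j_t; the blocks are ordered r,...,1 left to right,
  so column block t occupies columns sum(drop t js) ..< sum(drop (t-1) js).\<close>

definition row_block :: "nat list \<Rightarrow> nat \<Rightarrow> nat" where
  "row_block is a = (LEAST s. a < sum_list (take s is))"

definition col_block :: "nat list \<Rightarrow> nat \<Rightarrow> nat" where
  "col_block js b = (LEAST t. sum_list (drop t js) \<le> b)"

text \<open>Entry (a,b) of M(i;j): row block s, column block t.
  t \<ge> s: indeterminate (A^s when t = s, free indeterminates when t > s);
  t = s-1: the matrix I_{i_s, j_{s-1}} (1 on the local main diagonal);
  t < s-1: zero.\<close>
definition Mentry :: "nat list \<Rightarrow> nat list \<Rightarrow> nat \<Rightarrow> nat \<Rightarrow> 'a::comm_ring_1 mpol" where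
  "Mentry is js a b =
     (let s = row_block is a; t = col_block js b;
          a' = a - sum_list (take (s - 1) is); b' = b - sum_list (drop t js)
      in if s \<le> t then Var (a, b)
         else if t + 1 = s \<and> a' = b' then 1 else 0)"

definition Mmat :: "nat list \<Rightarrow> nat list \<Rightarrow> 'a::comm_ring_1 mpol mat" where
  "Mmat is js = mat (sum_list is) (sum_list js) (\<lambda>(a, b). Mentry is js a b)"

end

theory Submission
  imports Defs "HOL-Library.Product_Lexorder"
begin

text \<open>
  The determinant is the signed sum over all permutations of the products of the entries they
  select. Such a product is either zero or the squarefree monomial formed by the variables it
  meets, and distinct permutations give distinct monomials, because every row contains at most
  one entry 1. Hence there is no cancellation, the total degree of \<open>g\<close> is the largest number
  of variables met by a permutation, and it suffices to find, for every variable of a diagonal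
  block \<open>A\<^sup>k\<close>, a permutation through it that meets this maximal number of variables.

  A permutation sends the rows of the blocks \<open>s, ..., r\<close> into the columns of the blocks
  \<open>s - 1, ..., r\<close>, so it uses at least \<open>(i\<^sub>s + ... + i\<^sub>r) - (j\<^sub>s + ... + j\<^sub>r)\<close> entries 1
  of row block \<open>s\<close>. Irreducibility forces \<open>i\<^sub>s + ... + i\<^sub>r < j\<^sub>s\<^sub>-\<^sub>1 + ... + j\<^sub>r\<close>
  for \<open>2 \<le> s \<le> r\<close>: otherwise either no permutation avoids the zero entries, or \<open>g\<close> is the
  product of the determinants of two diagonal blocks of a block triangular matrix, each with
  a row or a column of variables and hence with vanishing constant term. This slack allows us to use exactly the
  minimal number of entries 1 in every block while avoiding the row and the column of the given
  variable, and a greedy matching completes this choice to a permutation that meets variables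
  everywhere else.
\<close>

section \<open>Block offsets\<close>

definition row_offset :: "nat list \<Rightarrow> nat \<Rightarrow> nat" where
  "row_offset xs s = sum_list (take s xs)"

definition col_offset :: "nat list \<Rightarrow> nat \<Rightarrow> nat" where
  "col_offset ys t = sum_list (drop t ys)"

lemma row_offset_0 [simp]: "row_offset xs 0 = 0"
  by (simp add: row_offset_def)

lemma row_offset_length: "length xs \<le> s \<Longrightarrow> row_offset xs s = sum_list xs"
  by (simp add: row_offset_def)

lemma row_offset_Suc: "s < length xs \<Longrightarrow> row_offset xs (Suc s) = row_offset xs s + xs ! s"
  by (simp add: row_offset_def take_Suc_conv_app_nth)

lemma row_offset_mono: "s \<le> s' \<Longrightarrow> row_offset xs s \<le> row_offset xs s'"
  unfolding row_offset_def by (metis append_take_drop_id le_add1 min_def sum_list_append take_take)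

lemma row_offset_le_sum_list: "row_offset xs s \<le> sum_list xs"
  by (metis row_offset_length row_offset_mono nle_le)

lemma row_offset_strict_mono:
  assumes "\<forall>x\<in>set xs. 0 < x" "s < s'" "s' \<le> length xs"
  shows "row_offset xs s < row_offset xs s'"
proof -
  have "row_offset xs s \<le> row_offset xs (s' - 1)"
    using assms by (intro row_offset_mono) auto
  also have "\<dots> < row_offset xs (Suc (s' - 1))"
    using assms by (subst row_offset_Suc) (auto simp: nth_mem)
  finally show ?thesis
    using assms by simp
qed

lemma col_offset_0 [simp]: "col_offset ys 0 = sum_list ys"
  by (simp add: col_offset_def)

lemma col_offset_length: "length ys \<le> t \<Longrightarrow> col_offset ys t = 0"
  by (simp add: col_offset_def)

lemma col_offset_Suc: "t < length ys \<Longrightarrow> col_offset ys t = col_offset ys (Suc t) + ys ! t"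
  unfolding col_offset_def by (simp add: Cons_nth_drop_Suc[symmetric])

lemma col_offset_antimono: "t \<le> t' \<Longrightarrow> col_offset ys t' \<le> col_offset ys t"
  unfolding col_offset_def by (metis append_take_drop_id drop_drop le_add2 le_add_diff_inverse2 sum_list_append)

lemma col_offset_le_sum_list: "col_offset ys t \<le> sum_list ys"
  using col_offset_antimono[of 0 t ys] by simp

lemma row_block_bounds:
  assumes "a < sum_list xs"
  shows "1 \<le> row_block xs a" "row_block xs a \<le> length xs"
    "row_offset xs (row_block xs a - 1) \<le> a" "a < row_offset xs (row_block xs a)"
proof -
  let ?P = "\<lambda>s. a < sum_list (take s xs)"
  have ex: "?P (length xs)"
    using assms by simp
  have least: "?P (row_block xs a)"
    unfolding row_block_def by (rule LeastI[of ?P, OF ex])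
  show "row_block xs a \<le> length xs"
    unfolding row_block_def by (rule Least_le[of ?P, OF ex])
  show pos: "1 \<le> row_block xs a"
    using least by (cases "row_block xs a") auto
  have "\<not> ?P (row_block xs a - 1)"
    using pos unfolding row_block_def by (intro not_less_Least) auto
  then show "row_offset xs (row_block xs a - 1) \<le> a"
    by (simp add: row_offset_def)
  show "a < row_offset xs (row_block xs a)"
    using least by (simp add: row_offset_def)
qed

lemma le_row_block_iff:
  assumes "a < sum_list xs" "1 \<le> s"
  shows "s \<le> row_block xs a \<longleftrightarrow> row_offset xs (s - 1) \<le> a"
proof
  assume "s \<le> row_block xs a"
  then show "row_offset xs (s - 1) \<le> a"
    using row_block_bounds[OF assms(1)] row_offset_mono[of "s - 1" "row_block xs a - 1" xs]
    by linarith
next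
  assume "row_offset xs (s - 1) \<le> a"
  then show "s \<le> row_block xs a"
    using row_block_bounds[OF assms(1)] row_offset_mono[of "row_block xs a" "s - 1" xs]
    by linarith
qed

lemma row_block_eqI:
  assumes "1 \<le> s" "s \<le> length xs" "row_offset xs (s - 1) \<le> a" "a < row_offset xs s"
  shows "row_block xs a = s"
proof -
  have a: "a < sum_list xs"
    using assms(4) row_offset_le_sum_list[of xs s] by linarith
  have "\<not> Suc s \<le> row_block xs a"
    using le_row_block_iff[OF a, of "Suc s"] assms(4) by simp
  then show ?thesis
    using le_row_block_iff[OF a assms(1)] assms(3) by simp
qed

lemma col_block_bounds:
  assumes "b < sum_list ys"
  shows "1 \<le> col_block ys b" "col_block ys b \<le> length ys"
    "col_offset ys (col_block ys b) \<le> b" "b < col_offset ys (col_block ys b - 1)"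
proof -
  let ?P = "\<lambda>t. sum_list (drop t ys) \<le> b"
  have ex: "?P (length ys)"
    by simp
  have least: "?P (col_block ys b)"
    unfolding col_block_def by (rule LeastI[of ?P, OF ex])
  show "col_block ys b \<le> length ys"
    unfolding col_block_def by (rule Least_le[of ?P, OF ex])
  show pos: "1 \<le> col_block ys b"
    using least assms by (cases "col_block ys b") auto
  have "\<not> ?P (col_block ys b - 1)"
    using pos unfolding col_block_def by (intro not_less_Least) auto
  then show "b < col_offset ys (col_block ys b - 1)"
    by (simp add: col_offset_def)
  show "col_offset ys (col_block ys b) \<le> b"
    using least by (simp add: col_offset_def)
qed

lemma le_col_block_iff:
  assumes "b < sum_list ys" "1 \<le> t"
  shows "t \<le> col_block ys b \<longleftrightarrow> b < col_offset ys (t - 1)"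
proof
  assume "t \<le> col_block ys b"
  then show "b < col_offset ys (t - 1)"
    using col_block_bounds[OF assms(1)] col_offset_antimono[of "t - 1" "col_block ys b - 1" ys]
    by linarith
next
  assume "b < col_offset ys (t - 1)"
  then show "t \<le> col_block ys b"
    using col_block_bounds[OF assms(1)] col_offset_antimono[of "col_block ys b" "t - 1" ys]
    by linarith
qed

lemma col_block_eqI:
  assumes "1 \<le> t" "t \<le> length ys" "col_offset ys t \<le> b" "b < col_offset ys (t - 1)"
  shows "col_block ys b = t"
proof -
  have b: "b < sum_list ys"
    using assms(4) col_offset_le_sum_list[of ys "t - 1"] by linarith
  have "\<not> Suc t \<le> col_block ys b"
    using le_col_block_iff[OF b, of "Suc t"] assms(3) by simp
  then show ?thesis
    using le_col_block_iff[OF b assms(1)] assms(4) by simp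
qed

section \<open>The determinant as a signed sum of squarefree monomials\<close>

definition set_monomial :: "'x set \<Rightarrow> ('x \<Rightarrow>\<^sub>0 nat)" where
  "set_monomial E = Abs_poly_mapping (\<lambda>x. if x \<in> E then 1 else 0)"

lemma lookup_set_monomial:
  assumes "finite E"
  shows "Poly_Mapping.lookup (set_monomial E) x = (if x \<in> E then 1 else 0)"
proof -
  have "{x. (if x \<in> E then 1 else 0::nat) \<noteq> 0} = E"
    by auto
  then show ?thesis
    unfolding set_monomial_def using assms by (subst lookup_Abs_poly_mapping) auto
qed

lemma keys_set_monomial: "finite E \<Longrightarrow> Poly_Mapping.keys (set_monomial E) = E"
  by (auto simp: in_keys_iff lookup_set_monomial split: if_splits)

lemma mon_deg_set_monomial: "finite E \<Longrightarrow> mon_deg (set_monomial E) = card E"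
  by (simp add: mon_deg_def keys_set_monomial lookup_set_monomial)

lemma set_monomial_empty [simp]: "set_monomial {} = 0"
  by (rule poly_mapping_eqI) (simp add: lookup_set_monomial)

lemma set_monomial_insert:
  "finite E \<Longrightarrow> e \<notin> E \<Longrightarrow> set_monomial (insert e E) = Poly_Mapping.single e 1 + set_monomial E"
  by (rule poly_mapping_eqI) (auto simp: lookup_set_monomial lookup_add lookup_single when_def)

definition var_entry :: "nat list \<Rightarrow> nat list \<Rightarrow> nat \<Rightarrow> nat \<Rightarrow> bool" where
  "var_entry xs ys a b \<longleftrightarrow> row_block xs a \<le> col_block ys b"

definition one_entry :: "nat list \<Rightarrow> nat list \<Rightarrow> nat \<Rightarrow> nat \<Rightarrow> bool" where
  "one_entry xs ys a b \<longleftrightarrow> col_block ys b + 1 = row_block xs a \<and>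
     a - row_offset xs (row_block xs a - 1) = b - col_offset ys (col_block ys b)"

lemma Mentry_eq:
  "Mentry xs ys a b =
     (if var_entry xs ys a b then Var (a, b) else if one_entry xs ys a b then 1 else 0)"
  unfolding Mentry_def Let_def var_entry_def one_entry_def row_offset_def col_offset_def by auto

lemma one_entry_not_var_entry: "one_entry xs ys a b \<Longrightarrow> \<not> var_entry xs ys a b"
  by (auto simp: one_entry_def var_entry_def)

lemma one_entry_unique:
  assumes "b < sum_list ys" "b' < sum_list ys" "one_entry xs ys a b" "one_entry xs ys a b'"
  shows "b = b'"
proof -
  have "col_block ys b = col_block ys b'"
    using assms(3,4) by (simp add: one_entry_def)
  then show ?thesis
    using assms col_block_bounds[OF assms(1)] col_block_bounds[OF assms(2)]
    by (simp add: one_entry_def)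
qed

definition var_positions ::
    "nat list \<Rightarrow> nat list \<Rightarrow> (nat \<Rightarrow> nat) \<Rightarrow> nat set \<Rightarrow> (nat \<times> nat) set" where
  "var_positions xs ys p A = {(a, p a) | a. a \<in> A \<and> var_entry xs ys a (p a)}"

lemma var_positions_eq_image:
  "var_positions xs ys p A = (\<lambda>a. (a, p a)) ` {a \<in> A. var_entry xs ys a (p a)}"
  unfolding var_positions_def by auto

lemma finite_var_positions: "finite A \<Longrightarrow> finite (var_positions xs ys p A)"
  by (simp add: var_positions_eq_image)

lemma card_var_positions:
  "finite A \<Longrightarrow> card (var_positions xs ys p A) = card {a \<in> A. var_entry xs ys a (p a)}"
  by (simp add: var_positions_eq_image card_image inj_on_def)

lemma prod_Mentry:
  assumes "finite A"
  shows "(\<Prod>a\<in>A. Mentry xs ys a (p a) :: 'a::comm_ring_1 mpol) =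
    (if \<forall>a\<in>A. var_entry xs ys a (p a) \<or> one_entry xs ys a (p a)
     then Poly_Mapping.single (set_monomial (var_positions xs ys p A)) 1 else 0)"
  using assms
proof (induction A rule: finite_induct)
  case empty
  then show ?case
    by (simp add: var_positions_def)
next
  case (insert x A)
  show ?case
  proof (cases "var_entry xs ys x (p x)")
    case True
    have "var_positions xs ys p (insert x A) = insert (x, p x) (var_positions xs ys p A)"
      using True by (auto simp: var_positions_def)
    moreover have "(x, p x) \<notin> var_positions xs ys p A"
      using insert.hyps(2) by (auto simp: var_positions_def)
    ultimately show ?thesis
      using True insert
      by (auto simp: Mentry_eq Var_def mult_single set_monomial_insert finite_var_positions)
  next
    case False
    then have "var_positions xs ys p (insert x A) = var_positions xs ys p A"
      by (auto simp: var_positions_def)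
    then show ?thesis
      using False insert by (auto simp: Mentry_eq)
  qed
qed

definition admissible :: "nat list \<Rightarrow> nat list \<Rightarrow> (nat \<Rightarrow> nat) \<Rightarrow> bool" where
  "admissible xs ys p \<longleftrightarrow>
     (\<forall>a\<in>{0..<sum_list xs}. var_entry xs ys a (p a) \<or> one_entry xs ys a (p a))"

definition perm_monomial :: "nat list \<Rightarrow> nat list \<Rightarrow> (nat \<Rightarrow> nat) \<Rightarrow> (nat \<times> nat) \<Rightarrow>\<^sub>0 nat" where
  "perm_monomial xs ys p = set_monomial (var_positions xs ys p {0..<sum_list xs})"

definition var_count :: "nat list \<Rightarrow> nat list \<Rightarrow> (nat \<Rightarrow> nat) \<Rightarrow> nat" where
  "var_count xs ys p = card {a \<in> {0..<sum_list xs}. var_entry xs ys a (p a)}"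

lemma mon_deg_perm_monomial: "mon_deg (perm_monomial xs ys p) = var_count xs ys p"
  by (simp add: perm_monomial_def var_count_def mon_deg_set_monomial finite_var_positions
      card_var_positions)

lemma det_Mmat_expansion:
  assumes "sum_list xs = sum_list ys"
  shows "det (Mmat xs ys :: 'a::comm_ring_1 mpol mat) =
    (\<Sum>p | p permutes {0..<sum_list xs}. signof p *
       (if admissible xs ys p then Poly_Mapping.single (perm_monomial xs ys p) 1 else 0))"
proof -
  let ?N = "sum_list xs"
  have car: "(Mmat xs ys :: 'a mpol mat) \<in> carrier_mat ?N ?N"
    using assms by (simp add: Mmat_def)
  show ?thesis
    unfolding det_def'[OF car]
  proof (intro sum.cong refl)
    fix p
    assume "p \<in> {p. p permutes {0..<?N}}"
    then have "(\<Prod>i = 0..<?N. (Mmat xs ys :: 'a mpol mat) $$ (i, p i)) =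
        (\<Prod>i = 0..<?N. Mentry xs ys i (p i))"
      using assms by (intro prod.cong) (auto simp: Mmat_def permutes_in_image)
    then show "signof p * (\<Prod>i = 0..<?N. (Mmat xs ys :: 'a mpol mat) $$ (i, p i)) =
        signof p * (if admissible xs ys p then Poly_Mapping.single (perm_monomial xs ys p) 1 else 0)"
      by (auto simp: prod_Mentry admissible_def perm_monomial_def)
  qed
qed

lemma lookup_det_Mmat:
  assumes "sum_list xs = sum_list ys"
  shows "Poly_Mapping.lookup (det (Mmat xs ys :: 'a::comm_ring_1 mpol mat)) m =
    (\<Sum>p | p permutes {0..<sum_list xs}.
       if admissible xs ys p \<and> perm_monomial xs ys p = m then of_int (sign p) else 0)"
proof -
  have "(of_int k :: 'a mpol) * Poly_Mapping.single M 1 = Poly_Mapping.single M (of_int k)"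
    for k M
    by (metis single_of_int mult_single add_0 mult.right_neutral)
  then show ?thesis
    unfolding det_Mmat_expansion[OF assms] lookup_sum
    by (intro sum.cong) (auto simp: lookup_single when_def)
qed

lemma keys_det_Mmat:
  assumes "sum_list xs = sum_list ys"
    and "m \<in> Poly_Mapping.keys (det (Mmat xs ys :: 'a::comm_ring_1 mpol mat))"
  obtains p where "p permutes {0..<sum_list xs}" "admissible xs ys p" "m = perm_monomial xs ys p"
proof -
  have "\<exists>p. p permutes {0..<sum_list xs} \<and> admissible xs ys p \<and> m = perm_monomial xs ys p"
  proof (rule ccontr)
    assume "\<not> ?thesis"
    then have "Poly_Mapping.lookup (det (Mmat xs ys :: 'a mpol mat)) m = 0"
      unfolding lookup_det_Mmat[OF assms(1)] by (intro sum.neutral) auto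
    then show False
      using assms(2) by (simp add: in_keys_iff)
  qed
  then show ?thesis
    using that by blast
qed

lemma admissible_perm_eqI:
  assumes "sum_list xs = sum_list ys"
    and p: "p permutes {0..<sum_list xs}" "admissible xs ys p"
    and q: "q permutes {0..<sum_list xs}" "admissible xs ys q"
    and eq: "perm_monomial xs ys p = perm_monomial xs ys q"
  shows "p = q"
proof
  let ?V = "\<lambda>p. var_positions xs ys p {0..<sum_list xs}"
  have V: "?V p = ?V q"
    using eq unfolding perm_monomial_def by (metis finite_atLeastLessThan finite_var_positions keys_set_monomial)
  fix a
  show "p a = q a"
  proof (cases "a < sum_list xs")
    case False
    then show ?thesis
      using p q by (simp add: permutes_def)
  next
    case a: True
    show ?thesis
    proof (cases "var_entry xs ys a (p a) \<or> var_entry xs ys a (q a)")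
      case True
      then have "(a, p a) \<in> ?V q \<or> (a, q a) \<in> ?V p"
        using V a by (auto simp: var_positions_def)
      then show ?thesis
        by (auto simp: var_positions_def)
    next
      case False
      then have "one_entry xs ys a (p a)" "one_entry xs ys a (q a)"
        using p(2) q(2) a by (auto simp: admissible_def)
      moreover have "p a < sum_list ys" "q a < sum_list ys"
        using p(1) q(1) a assms(1) by (auto simp: permutes_in_image)
      ultimately show ?thesis
        using one_entry_unique by metis
    qed
  qed
qed

lemma perm_monomial_in_keys_det_Mmat:
  assumes eq: "sum_list xs = sum_list ys"
    and \<sigma>: "\<sigma> permutes {0..<sum_list xs}" "admissible xs ys \<sigma>"
  shows "perm_monomial xs ys \<sigma> \<in> Poly_Mapping.keys (det (Mmat xs ys :: 'a::field mpol mat))"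
proof -
  let ?f = "\<lambda>p. if admissible xs ys p \<and> perm_monomial xs ys p = perm_monomial xs ys \<sigma>
    then of_int (sign p) else (0::'a)"
  have "?f p = 0" if "p permutes {0..<sum_list xs}" "p \<noteq> \<sigma>" for p
    using admissible_perm_eqI[OF eq that(1) _ \<sigma>] that(2) by auto
  then have "(\<Sum>p | p permutes {0..<sum_list xs}. ?f p) = (\<Sum>p\<in>{\<sigma>}. ?f p)"
    using \<sigma>(1) by (intro sum.mono_neutral_right) (auto simp: finite_permutations)
  moreover have "?f \<sigma> \<noteq> 0"
    using \<sigma>(2) by (auto simp: sign_def)
  ultimately show ?thesis
    unfolding in_keys_iff lookup_det_Mmat[OF eq] by simp
qed

lemma appears_in_top_det_MmatI:
  assumes eq: "sum_list xs = sum_list ys"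
    and \<sigma>: "\<sigma> permutes {0..<sum_list xs}" "admissible xs ys \<sigma>"
    and max: "\<And>p. p permutes {0..<sum_list xs} \<Longrightarrow> admissible xs ys p \<Longrightarrow>
       var_count xs ys p \<le> var_count xs ys \<sigma>"
    and a: "a < sum_list xs" "var_entry xs ys a (\<sigma> a)"
  shows "appears_in_top (a, \<sigma> a) (det (Mmat xs ys :: 'a::field mpol mat))"
proof -
  let ?g = "det (Mmat xs ys :: 'a mpol mat)"
  have key: "perm_monomial xs ys \<sigma> \<in> Poly_Mapping.keys ?g"
    by (rule perm_monomial_in_keys_det_Mmat[OF eq \<sigma>])
  have deg_le: "mon_deg m \<le> var_count xs ys \<sigma>" if m: "m \<in> Poly_Mapping.keys ?g" for m
  proof -
    obtain p where "p permutes {0..<sum_list xs}" "admissible xs ys p" "m = perm_monomial xs ys p"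
      using keys_det_Mmat[OF eq m] .
    then show ?thesis
      using max by (simp add: mon_deg_perm_monomial)
  qed
  have "total_degree ?g = var_count xs ys \<sigma>"
    unfolding total_degree_def
  proof (rule Max_eqI)
    show "var_count xs ys \<sigma> \<in> insert 0 (mon_deg ` Poly_Mapping.keys ?g)"
      using key by (metis imageI insertI2 mon_deg_perm_monomial)
  qed (use deg_le in auto)
  then have "perm_monomial xs ys \<sigma> \<in> top_support ?g"
    using key by (simp add: top_support_def mon_deg_perm_monomial)
  moreover have "Poly_Mapping.lookup (perm_monomial xs ys \<sigma>) (a, \<sigma> a) > 0"
    using a by (simp add: perm_monomial_def lookup_set_monomial finite_var_positions
        var_positions_def)
  ultimately show ?thesis
    unfolding appears_in_top_def by blast
qed

section \<open>Irreducibility forces the blocks to overlap\<close>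

lemma monomial_add_eq_0_iff: "(l :: 'x \<Rightarrow>\<^sub>0 nat) + q = 0 \<longleftrightarrow> l = 0 \<and> q = 0"
  by (auto simp: poly_mapping_eq_iff lookup_add fun_eq_iff)

lemma lookup_mult_0:
  fixes f g :: "('x \<Rightarrow>\<^sub>0 nat) \<Rightarrow>\<^sub>0 'a::comm_semiring_1"
  shows "Poly_Mapping.lookup (f * g) 0 = Poly_Mapping.lookup f 0 * Poly_Mapping.lookup g 0"
proof -
  have "(\<Sum>q. Poly_Mapping.lookup g q when l + q = 0) = (Poly_Mapping.lookup g 0 when l = 0)" for l
  proof -
    have e: "(\<lambda>q. Poly_Mapping.lookup g q when l + q = 0) =
        (\<lambda>q. (Poly_Mapping.lookup g 0 when l = 0) when q = 0)"
      by (auto simp: when_def fun_eq_iff monomial_add_eq_0_iff)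
    show ?thesis
      unfolding e by (rule Sum_any_when_equal)
  qed
  then show ?thesis
    by (simp add: lookup_mult mult_when)
qed

lemma comm_ring_hom_lookup_0:
  "comm_ring_hom (\<lambda>p :: ('x \<Rightarrow>\<^sub>0 nat) \<Rightarrow>\<^sub>0 'a::comm_ring_1. Poly_Mapping.lookup p 0)"
  by unfold_locales (simp_all add: lookup_add lookup_mult_0)

lemma lookup_0_neq_0_if_unit:
  fixes u :: "('x \<Rightarrow>\<^sub>0 nat) \<Rightarrow>\<^sub>0 'a::comm_ring_1"
  assumes "u dvd 1"
  shows "Poly_Mapping.lookup u 0 \<noteq> 0"
proof -
  obtain w where "1 = u * w"
    using assms by (auto elim: dvdE)
  then have "Poly_Mapping.lookup (u * w) 0 = 1"
    by (metis lookup_one_zero)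
  then have "Poly_Mapping.lookup u 0 * Poly_Mapping.lookup w 0 = 1"
    by (simp add: lookup_mult_0)
  then show ?thesis
    by auto
qed

lemma lookup_Var_0: "Poly_Mapping.lookup (Var x :: 'a::comm_ring_1 mpol) 0 = 0"
proof -
  have "Poly_Mapping.single x (1::nat) \<noteq> 0"
    by (metis lookup_single_eq lookup_zero one_neq_zero)
  then show ?thesis
    by (simp add: Var_def lookup_single when_def)
qed

lemma lookup_det_0_if_row:
  fixes A :: "(('x \<Rightarrow>\<^sub>0 nat) \<Rightarrow>\<^sub>0 'a::comm_ring_1) mat"
  assumes A: "A \<in> carrier_mat n n" and i: "i < n"
    and row: "\<And>j. j < n \<Longrightarrow> Poly_Mapping.lookup (A $$ (i, j)) 0 = 0"
  shows "Poly_Mapping.lookup (det A) 0 = 0"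
proof -
  let ?A0 = "map_mat (\<lambda>p. Poly_Mapping.lookup p 0) A"
  have "det ?A0 = 0"
    using A i row by (subst laplace_expansion_row[of _ n i]) auto
  then show ?thesis
    by (simp add: comm_ring_hom.hom_det[OF comm_ring_hom_lookup_0, symmetric])
qed

lemma lookup_det_0_if_col:
  fixes A :: "(('x \<Rightarrow>\<^sub>0 nat) \<Rightarrow>\<^sub>0 'a::comm_ring_1) mat"
  assumes A: "A \<in> carrier_mat n n" and j: "j < n"
    and col: "\<And>i. i < n \<Longrightarrow> Poly_Mapping.lookup (A $$ (i, j)) 0 = 0"
  shows "Poly_Mapping.lookup (det A) 0 = 0"
  using lookup_det_0_if_row[of "transpose_mat A" n j] assms by (simp add: det_transpose)

text \<open>Rotating the first \<open>k\<close> columns to the end makes the lower left block vanish.\<close>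

lemma det_lower_right_zero:
  fixes A :: "'a::idom mat"
  assumes A: "A \<in> carrier_mat (k + c) (k + c)"
    and zero: "\<And>i j. k \<le> i \<Longrightarrow> i < k + c \<Longrightarrow> c \<le> j \<Longrightarrow> j < k + c \<Longrightarrow> A $$ (i, j) = 0"
  shows "det A = (-1) ^ (k * c) * det (mat k k (\<lambda>(i, j). A $$ (i, j + c)))
    * det (mat c c (\<lambda>(i, j). A $$ (i + k, j)))"
proof -
  define B where "B = mat k k (\<lambda>(i, j). A $$ (i, j + c))"
  define X where "X = mat k c (\<lambda>(i, j). A $$ (i, j))"
  define D where "D = mat c c (\<lambda>(i, j). A $$ (i + k, j))"
  have "mat (k + c) (k + c) (\<lambda>(i, j). A $$ (i, if j < k then j + c else j - k)) =
      four_block_mat B X (0\<^sub>m c k) D"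
    by (rule eq_matI) (auto simp: B_def X_def D_def zero)
  then have "det A = (-1) ^ (k * c) * det (four_block_mat B X (0\<^sub>m c k) D)"
    using det_swap_cols[OF A] by simp
  also have "det (four_block_mat B X (0\<^sub>m c k) D) = det B * det D"
    by (rule det_four_block_mat_lower_left_zero) (auto simp: B_def X_def D_def)
  finally show ?thesis
    by (simp add: B_def D_def)
qed

lemma zero_entry_below_staircase:
  assumes eq: "sum_list xs = sum_list ys" and s: "2 \<le> s"
    and a: "a < sum_list xs" "row_offset xs (s - 1) \<le> a"
    and b: "b < sum_list xs" "col_offset ys (s - 2) \<le> b"
  shows "\<not> var_entry xs ys a b \<and> \<not> one_entry xs ys a b"
proof -
  have "s \<le> row_block xs a"
    using le_row_block_iff[of a xs s] a s by simp
  moreover have "\<not> s - 1 \<le> col_block ys b"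
    using le_col_block_iff[of b ys "s - 1"] b s eq by (simp add: numeral_2_eq_2)
  ultimately show ?thesis
    by (auto simp: var_entry_def one_entry_def)
qed

lemma admissible_image_lower_rows:
  assumes eq: "sum_list xs = sum_list ys" and s: "2 \<le> s"
    and p: "p permutes {0..<sum_list xs}" "admissible xs ys p"
  shows "p ` {row_offset xs (s - 1)..<sum_list xs} \<subseteq> {0..<col_offset ys (s - 2)}"
proof
  fix b
  assume "b \<in> p ` {row_offset xs (s - 1)..<sum_list xs}"
  then obtain a where a: "row_offset xs (s - 1) \<le> a" "a < sum_list xs" and b: "b = p a"
    by auto
  have "p a < sum_list xs"
    using p(1) a by (auto simp: permutes_in_image)
  moreover have "var_entry xs ys a (p a) \<or> one_entry xs ys a (p a)"
    using p(2) a by (auto simp: admissible_def)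
  ultimately have "\<not> col_offset ys (s - 2) \<le> p a"
    using zero_entry_below_staircase[OF eq s a(2,1)] by blast
  then show "b \<in> {0..<col_offset ys (s - 2)}"
    by (simp add: b)
qed

lemma det_Mmat_eq_0_if_too_many_lower_rows:
  assumes eq: "sum_list xs = sum_list ys" and s: "2 \<le> s"
    and less: "col_offset ys (s - 2) < sum_list xs - row_offset xs (s - 1)"
  shows "det (Mmat xs ys :: 'a::comm_ring_1 mpol mat) = 0"
proof -
  have "\<not> admissible xs ys p" if p: "p permutes {0..<sum_list xs}" for p
  proof
    let ?R = "{row_offset xs (s - 1)..<sum_list xs}"
    assume "admissible xs ys p"
    then have "p ` ?R \<subseteq> {0..<col_offset ys (s - 2)}"
      by (rule admissible_image_lower_rows[OF eq s p])
    moreover have "inj_on p ?R"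
      using permutes_inj[OF p] by (auto intro: inj_on_subset)
    ultimately have "card ?R \<le> card {0..<col_offset ys (s - 2)}"
      by (intro card_inj_on_le) auto
    then show False
      using less by simp
  qed
  then show ?thesis
    unfolding det_Mmat_expansion[OF eq] by (intro sum.neutral) auto
qed
lemma row_offset_pos:
  "\<forall>x\<in>set xs. 0 < x \<Longrightarrow> 0 < s \<Longrightarrow> s \<le> length xs \<Longrightarrow> 0 < row_offset xs s"
  using row_offset_strict_mono[of xs 0 s] by simp

lemma col_offset_pos:
  assumes "\<forall>y\<in>set ys. 0 < y" "t < length ys"
  shows "0 < col_offset ys t"
proof -
  have "col_offset ys (length ys - 1) = ys ! (length ys - 1)"
    using col_offset_Suc[of "length ys - 1" ys] assms(2) by (simp add: col_offset_length)
  moreover have "col_offset ys (length ys - 1) \<le> col_offset ys t"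
    using assms(2) by (intro col_offset_antimono) simp
  moreover have "0 < ys ! (length ys - 1)"
    using assms by (simp add: nth_mem)
  ultimately show ?thesis
    by linarith
qed

lemma var_entry_first_row:
  assumes "\<forall>x\<in>set xs. 0 < x" "xs \<noteq> []" "b < sum_list ys"
  shows "var_entry xs ys 0 b"
proof -
  have "row_block xs 0 = 1"
    using assms row_offset_pos[of xs 1] by (intro row_block_eqI) (auto simp: Suc_le_eq)
  then show ?thesis
    using col_block_bounds(1)[OF assms(3)] by (simp add: var_entry_def)
qed

lemma var_entry_first_col:
  assumes "\<forall>y\<in>set ys. 0 < y" "length xs = length ys" "ys \<noteq> []" "a < sum_list xs"
  shows "var_entry xs ys a 0"
proof -
  have "col_block ys 0 = length ys"
    using assms col_offset_pos[of ys "length ys - 1"]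
    by (intro col_block_eqI) (auto simp: col_offset_length Suc_le_eq)
  then show ?thesis
    using row_block_bounds(2)[OF assms(4)] assms(2) by (simp add: var_entry_def)
qed

lemma det_Mmat_square_corner_factor:
  assumes eq: "sum_list xs = sum_list ys" and s: "2 \<le> s"
    and k: "k = row_offset xs (s - 1)" and c: "c = col_offset ys (s - 2)"
    and N: "sum_list xs = k + c"
  shows "det (Mmat xs ys :: 'a::idom mpol mat) =
    ((-1) ^ (k * c) * det (mat k k (\<lambda>(i, j). Mmat xs ys $$ (i, j + c))))
    * det (mat c c (\<lambda>(i, j). Mmat xs ys $$ (i + k, j)))"
proof (subst det_lower_right_zero)
  show "(Mmat xs ys :: 'a mpol mat) \<in> carrier_mat (k + c) (k + c)"
    using N eq by (simp add: Mmat_def)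
  show "(Mmat xs ys :: 'a mpol mat) $$ (i, j) = 0"
    if "k \<le> i" "i < k + c" "c \<le> j" "j < k + c" for i j
    using zero_entry_below_staircase[OF eq s, of i j] that N eq
    by (simp add: Mmat_def Mentry_eq k c)
qed simp

lemma not_irreducible_det_Mmat_if_square_corner:
  assumes len: "length xs = n" "length ys = n"
    and pos: "\<forall>x\<in>set xs. 0 < x" "\<forall>y\<in>set ys. 0 < y"
    and eq: "sum_list xs = sum_list ys"
    and s: "2 \<le> s" "s \<le> n"
    and square: "col_offset ys (s - 2) = sum_list xs - row_offset xs (s - 1)"
  shows "\<not> irreducible (det (Mmat xs ys :: 'a::field mpol mat))"
proof -
  let ?M = "Mmat xs ys :: 'a mpol mat"
  define k where "k = row_offset xs (s - 1)"
  define c where "c = col_offset ys (s - 2)"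
  define B where "B = mat k k (\<lambda>(i, j). ?M $$ (i, j + c))"
  define D where "D = mat c c (\<lambda>(i, j). ?M $$ (i + k, j))"
  have N: "sum_list xs = k + c"
    using square row_offset_le_sum_list[of xs "s - 1"] by (simp add: k_def c_def)
  have M: "?M $$ (i, j) = Mentry xs ys i j" if "i < k + c" "j < k + c" for i j
    using that eq N by (simp add: Mmat_def)
  have factor: "det ?M = ((-1) ^ (k * c) * det B) * det D"
    unfolding B_def D_def by (rule det_Mmat_square_corner_factor[OF eq s(1) k_def c_def N])
  have nonempty: "xs \<noteq> []" "ys \<noteq> []"
    using len s by auto
  have "0 < k"
    using row_offset_pos[OF pos(1), of "s - 1"] len s by (simp add: k_def)
  have "0 < c"
    using col_offset_pos[OF pos(2), of "s - 2"] len s by (simp add: c_def)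
  have B0: "Poly_Mapping.lookup (det B) 0 = 0"
  proof (rule lookup_det_0_if_row[of _ k 0])
    fix j
    assume "j < k"
    then show "Poly_Mapping.lookup (B $$ (0, j)) 0 = 0"
      using \<open>0 < k\<close> var_entry_first_row[OF pos(1) nonempty(1), of "j + c" ys] N eq
      by (auto simp: B_def M Mentry_eq lookup_Var_0)
  qed (use \<open>0 < k\<close> in \<open>simp_all add: B_def\<close>)
  have D0: "Poly_Mapping.lookup (det D) 0 = 0"
  proof (rule lookup_det_0_if_col[of _ c 0])
    fix i
    assume "i < c"
    then show "Poly_Mapping.lookup (D $$ (i, 0)) 0 = 0"
      using \<open>0 < c\<close> var_entry_first_col[OF pos(2) _ nonempty(2), of xs "i + k"] len N
      by (auto simp: D_def M Mentry_eq lookup_Var_0)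
  qed (use \<open>0 < c\<close> in \<open>simp_all add: D_def\<close>)
  have "\<not> det B dvd 1"
    using lookup_0_neq_0_if_unit B0 by blast
  then have "\<not> (-1) ^ (k * c) * det B dvd 1"
    using dvd_mult_right by blast
  moreover have "\<not> det D dvd 1"
    using lookup_0_neq_0_if_unit D0 by blast
  ultimately show ?thesis
    using factor unfolding irreducible_def by blast
qed

lemma lower_rows_lt_cols_if_irreducible:
  assumes len: "length xs = n" "length ys = n"
    and pos: "\<forall>x\<in>set xs. 0 < x" "\<forall>y\<in>set ys. 0 < y"
    and eq: "sum_list xs = sum_list ys"
    and nz: "det (Mmat xs ys :: 'a::field mpol mat) \<noteq> 0"
    and irr: "irreducible (det (Mmat xs ys :: 'a::field mpol mat))"
    and s: "2 \<le> s" "s \<le> n"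
  shows "sum_list xs - row_offset xs (s - 1) < col_offset ys (s - 2)"
proof (rule ccontr)
  assume "\<not> ?thesis"
  then consider "col_offset ys (s - 2) < sum_list xs - row_offset xs (s - 1)"
    | "col_offset ys (s - 2) = sum_list xs - row_offset xs (s - 1)"
    by linarith
  then show False
  proof cases
    case 1
    then show False
      using det_Mmat_eq_0_if_too_many_lower_rows[OF eq s(1)] nz by blast
  next
    case 2
    then show False
      using not_irreducible_det_Mmat_if_square_corner[OF len pos eq s] irr by blast
  qed
qed

section \<open>An upper bound for the degree\<close>

text \<open>\<open>forced_ones s = (i\<^sub>s + ... + i\<^sub>r) - (j\<^sub>s + ... + j\<^sub>r)\<close> bounds from below the number of
  entries 1 of row block \<open>s\<close> used by an admissible permutation.\<close>

definition forced_ones :: "nat list \<Rightarrow> nat list \<Rightarrow> nat \<Rightarrow> nat" where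
  "forced_ones xs ys s = (sum_list xs - row_offset xs (s - 1)) - col_offset ys (s - 1)"

definition one_rows :: "nat list \<Rightarrow> nat list \<Rightarrow> (nat \<Rightarrow> nat) \<Rightarrow> nat \<Rightarrow> nat set" where
  "one_rows xs ys p s = {a \<in> {0..<sum_list xs}. row_block xs a = s \<and> one_entry xs ys a (p a)}"

lemma forced_ones_le_card_one_rows:
  assumes eq: "sum_list xs = sum_list ys"
    and p: "p permutes {0..<sum_list xs}" "admissible xs ys p" and s: "1 \<le> s"
  shows "forced_ones xs ys s \<le> card (one_rows xs ys p s)"
proof -
  let ?R = "{row_offset xs (s - 1)..<sum_list xs}"
  let ?O = "one_rows xs ys p s"
  have "p ` (?R - ?O) \<subseteq> {0..<col_offset ys (s - 1)}"
  proof
    fix b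
    assume "b \<in> p ` (?R - ?O)"
    then obtain a where a: "a \<in> ?R" "a \<notin> ?O" and b: "b = p a"
      by auto
    have aN: "a < sum_list xs"
      using a by simp
    have sa: "s \<le> row_block xs a"
      using le_row_block_iff[OF aN s] a by simp
    have pa: "p a < sum_list ys"
      using p(1) aN eq by (simp add: permutes_in_image)
    have "var_entry xs ys a (p a) \<or> one_entry xs ys a (p a)"
      using p(2) aN by (simp add: admissible_def)
    moreover have "row_block xs a \<noteq> s" if "one_entry xs ys a (p a)"
      using a aN that by (auto simp: one_rows_def)
    ultimately have "s \<le> col_block ys (p a)"
      using sa by (auto simp: var_entry_def one_entry_def)
    then show "b \<in> {0..<col_offset ys (s - 1)}"
      using le_col_block_iff[OF pa s] b by simp
  qed
  moreover have "inj_on p (?R - ?O)"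
    using permutes_inj[OF p(1)] by (auto intro: inj_on_subset)
  ultimately have "card (?R - ?O) \<le> col_offset ys (s - 1)"
    using card_inj_on_le[of p "?R - ?O" "{0..<col_offset ys (s - 1)}"] by simp
  moreover have "card ?R - card ?O \<le> card (?R - ?O)"
    by (rule diff_card_le_card_Diff) (simp_all add: one_rows_def)
  ultimately show ?thesis
    unfolding forced_ones_def by simp
qed

lemma var_count_le:
  assumes eq: "sum_list xs = sum_list ys"
    and p: "p permutes {0..<sum_list xs}" "admissible xs ys p"
  shows "var_count xs ys p + (\<Sum>s\<in>{2..n}. forced_ones xs ys s) \<le> sum_list xs"
proof -
  let ?V = "{a \<in> {0..<sum_list xs}. var_entry xs ys a (p a)}"
  let ?U = "\<Union>s\<in>{2..n}. one_rows xs ys p s"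
  have "(\<Sum>s\<in>{2..n}. forced_ones xs ys s) \<le> (\<Sum>s\<in>{2..n}. card (one_rows xs ys p s))"
    using forced_ones_le_card_one_rows[OF eq p] by (intro sum_mono) simp
  also have "\<dots> = card ?U"
    by (rule card_UN_disjoint[symmetric]) (auto simp: one_rows_def)
  finally have "(\<Sum>s\<in>{2..n}. forced_ones xs ys s) \<le> card ?U" .
  moreover have "card ?V + card ?U = card (?V \<union> ?U)"
    by (rule card_Un_disjoint[symmetric]) (auto simp: one_rows_def dest: one_entry_not_var_entry)
  moreover have "card (?V \<union> ?U) \<le> card {0..<sum_list xs}"
    by (rule card_mono) (auto simp: one_rows_def)
  ultimately show ?thesis
    unfolding var_count_def card_atLeastLessThan by linarith
qed

section \<open>A permutation of maximal degree through a prescribed entry\<close>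

lemma threshold_condition_Diff:
  fixes g :: "'x \<Rightarrow> nat" and h :: "'y \<Rightarrow> nat"
  assumes "finite X" "finite Y"
    and cond: "\<And>s. card {x \<in> X. s \<le> g x} \<le> card {y \<in> Y. s \<le> h y}"
    and x0: "x0 \<in> X" "\<And>x. x \<in> X \<Longrightarrow> g x \<le> g x0" and y0: "y0 \<in> Y" "g x0 \<le> h y0"
  shows "card {x \<in> X - {x0}. s \<le> g x} \<le> card {y \<in> Y - {y0}. s \<le> h y}"
proof (cases "s \<le> g x0")
  case True
  have "{x \<in> X - {x0}. s \<le> g x} = {x \<in> X. s \<le> g x} - {x0}"
    "{y \<in> Y - {y0}. s \<le> h y} = {y \<in> Y. s \<le> h y} - {y0}"
    by auto
  moreover have "x0 \<in> {x \<in> X. s \<le> g x}" "y0 \<in> {y \<in> Y. s \<le> h y}"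
    using True x0 y0 by auto
  ultimately show ?thesis
    using assms(1,2) cond[of s] by (simp add: card_Diff_singleton)
next
  case False
  then have empty: "{x \<in> X - {x0}. s \<le> g x} = {}"
    using x0(2) by force
  show ?thesis
    unfolding empty by simp
qed

text \<open>Greedy: matching an element of maximal \<open>g\<close> with any admissible partner preserves the
  condition for the remaining elements.\<close>

lemma threshold_matching:
  fixes g :: "'x \<Rightarrow> nat" and h :: "'y \<Rightarrow> nat"
  assumes "finite X" "finite Y" "card X = card Y"
    and "\<And>s. card {x \<in> X. s \<le> g x} \<le> card {y \<in> Y. s \<le> h y}"
  shows "\<exists>\<pi>. bij_betw \<pi> X Y \<and> (\<forall>x\<in>X. g x \<le> h (\<pi> x))"
  using assms
proof (induction "card X" arbitrary: X Y)
  case 0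
  then show ?case
    by (auto simp: bij_betw_def)
next
  case (Suc m)
  then have "Max (g ` X) \<in> g ` X"
    by (intro Max_in) auto
  then obtain x0 where x0: "x0 \<in> X" "g x0 = Max (g ` X)"
    by (metis imageE)
  then have x0_max: "g x \<le> g x0" if "x \<in> X" for x
    using Suc.prems(1) that by simp
  have "0 < card {x \<in> X. g x0 \<le> g x}"
    using x0 Suc.prems(1) by (subst card_gt_0_iff) auto
  then have "{y \<in> Y. g x0 \<le> h y} \<noteq> {}"
    using Suc.prems(4)[of "g x0"] by (metis card.empty not_less_zero order_less_le_trans)
  then obtain y0 where y0: "y0 \<in> Y" "g x0 \<le> h y0"
    by blast
  have "m = card (X - {x0})" "card (X - {x0}) = card (Y - {y0})"
    using Suc x0 y0 by auto
  then obtain \<pi> where \<pi>: "bij_betw \<pi> (X - {x0}) (Y - {y0})" "\<forall>x\<in>X - {x0}. g x \<le> h (\<pi> x)"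
    using Suc.hyps(1)[of "X - {x0}" "Y - {y0}"] Suc.prems
      threshold_condition_Diff[OF Suc.prems(1,2,4) x0(1) x0_max y0]
    by auto
  have "bij_betw (\<pi>(x0 := y0)) (X - {x0}) (Y - {y0})"
    using \<pi>(1) by (rule bij_betw_cong[THEN iffD1, rotated]) auto
  then have "bij_betw (\<pi>(x0 := y0)) (X - {x0} \<union> {x0}) (Y - {y0} \<union> {y0})"
    by (rule bij_betw_combine) (auto simp: bij_betw_def)
  moreover have "X - {x0} \<union> {x0} = X" "Y - {y0} \<union> {y0} = Y"
    using x0 y0 by auto
  moreover have "\<forall>x\<in>X. g x \<le> h ((\<pi>(x0 := y0)) x)"
    using \<pi>(2) y0 by auto
  ultimately show ?case
    by metis
qed

lemma card_rows_from:
  "card {a \<in> {0..<sum_list xs}. s \<le> row_block xs a} = sum_list xs - row_offset xs (s - 1)"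
proof (cases "s = 0")
  case True
  then show ?thesis
    by simp
next
  case False
  then have "{a \<in> {0..<sum_list xs}. s \<le> row_block xs a} = {row_offset xs (s - 1)..<sum_list xs}"
    using le_row_block_iff[of _ xs s] by auto
  then show ?thesis
    by simp
qed

lemma card_cols_from:
  "card {b \<in> {0..<sum_list ys}. t \<le> col_block ys b} = col_offset ys (t - 1)"
proof (cases "t = 0")
  case True
  then show ?thesis
    by simp
next
  case False
  then have "{b \<in> {0..<sum_list ys}. t \<le> col_block ys b} = {0..<col_offset ys (t - 1)}"
    using le_col_block_iff[of _ ys t] col_offset_le_sum_list[of ys "t - 1"] by auto
  then show ?thesis
    by simp
qed

context
  fixes xs ys :: "nat list" and n k a0 b0 :: nat
  assumes len: "length xs = n" "length ys = n"
    and pos: "\<forall>x\<in>set xs. 0 < x" "\<forall>y\<in>set ys. 0 < y"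
    and eq: "sum_list xs = sum_list ys"
    and overlap: "\<And>s. 2 \<le> s \<Longrightarrow> s \<le> n \<Longrightarrow>
      sum_list xs - row_offset xs (s - 1) < col_offset ys (s - 2)"
    and a0: "a0 < sum_list xs" "row_block xs a0 = k"
    and b0: "b0 < sum_list ys" "col_block ys b0 = k"
begin

text \<open>For \<open>2 \<le> s \<le> n\<close> the permutation uses the entries \<open>1\<close> of row block \<open>s\<close> at the local
  positions \<open>chosen_local s \<subseteq> {0..forced_ones s}\<close>, which avoid the row of \<open>a0\<close> (if \<open>s = k\<close>)
  and the column of \<open>b0\<close> (if \<open>s = k + 1\<close>); the default value \<open>avoided_local s = forced_ones s\<close>
  means that nothing has to be avoided.\<close>

definition avoided_local :: "nat \<Rightarrow> nat" where
  "avoided_local s = (if s = k then a0 - row_offset xs (k - 1)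
     else if s = Suc k then b0 - col_offset ys k else forced_ones xs ys s)"

definition chosen_local :: "nat \<Rightarrow> nat set" where
  "chosen_local s = (if avoided_local s < forced_ones xs ys s
     then {0..forced_ones xs ys s} - {avoided_local s} else {0..<forced_ones xs ys s})"

definition chosen_rows_in :: "nat \<Rightarrow> nat set" where
  "chosen_rows_in s = (\<lambda>l. row_offset xs (s - 1) + l) ` chosen_local s"

definition chosen_cols_in :: "nat \<Rightarrow> nat set" where
  "chosen_cols_in s = (\<lambda>l. col_offset ys (s - 1) + l) ` chosen_local s"

definition chosen_rows :: "nat set" where
  "chosen_rows = (\<Union>s\<in>{2..n}. chosen_rows_in s)"

definition chosen_cols :: "nat set" where
  "chosen_cols = (\<Union>s\<in>{2..n}. chosen_cols_in s)"

definition one_col :: "nat \<Rightarrow> nat" where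
  "one_col a = a - row_offset xs (row_block xs a - 1) + col_offset ys (row_block xs a - 1)"

lemma chosen_local_props:
  "card (chosen_local s) = forced_ones xs ys s"
  "avoided_local s \<notin> chosen_local s"
  "l \<in> chosen_local s \<Longrightarrow> l \<le> forced_ones xs ys s"
  "finite (chosen_local s)"
  unfolding chosen_local_def by (auto split: if_splits)

lemma forced_ones_lt:
  assumes s: "2 \<le> s" "s \<le> n"
  shows "forced_ones xs ys s < xs ! (s - 1)" "forced_ones xs ys s < ys ! (s - 2)"
proof -
  have "col_offset ys (s - 2) = col_offset ys (s - 1) + ys ! (s - 2)"
    using col_offset_Suc[of "s - 2" ys] len s by (simp add: Suc_diff_Suc numeral_2_eq_2)
  moreover have "0 < ys ! (s - 2)"
    using pos len s by (auto simp: nth_mem)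
  ultimately show "forced_ones xs ys s < ys ! (s - 2)"
    using overlap[OF s] unfolding forced_ones_def by linarith
  have "row_offset xs s = row_offset xs (s - 1) + xs ! (s - 1)"
    using row_offset_Suc[of "s - 1" xs] len s by simp
  moreover have "0 < xs ! (s - 1)"
    using pos len s by (auto simp: nth_mem)
  moreover have "sum_list xs - row_offset xs s < col_offset ys (s - 1)"
  proof (cases "s < n")
    case True
    then show ?thesis
      using overlap[of "Suc s"] s by simp
  next
    case False
    then show ?thesis
      using row_offset_length[of xs s] col_offset_pos[OF pos(2), of "s - 1"] len s by simp
  qed
  ultimately show "forced_ones xs ys s < xs ! (s - 1)"
    unfolding forced_ones_def by linarith
qed

lemma chosen_rows_in_props:
  assumes s: "2 \<le> s" "s \<le> n" and l: "l \<in> chosen_local s"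
  defines "x \<equiv> row_offset xs (s - 1) + l"
  shows "x < sum_list xs" "row_block xs x = s" "one_col x = col_offset ys (s - 1) + l"
    "one_col x < sum_list xs" "col_block ys (one_col x) = s - 1" "one_entry xs ys x (one_col x)"
proof -
  have lx: "l < xs ! (s - 1)" "l < ys ! (s - 2)"
    using chosen_local_props(3)[OF l] forced_ones_lt[OF s] by auto
  have rs: "row_offset xs s = row_offset xs (s - 1) + xs ! (s - 1)"
    using row_offset_Suc[of "s - 1" xs] len s by simp
  then show "x < sum_list xs"
    using row_offset_le_sum_list[of xs s] lx by (simp add: x_def)
  show rb: "row_block xs x = s"
    using rs lx len s by (intro row_block_eqI) (auto simp: x_def)
  then show col: "one_col x = col_offset ys (s - 1) + l"
    by (simp add: one_col_def x_def)
  have cs: "col_offset ys (s - 2) = col_offset ys (s - 1) + ys ! (s - 2)"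
    using col_offset_Suc[of "s - 2" ys] len s by (simp add: Suc_diff_Suc numeral_2_eq_2)
  then show "one_col x < sum_list xs"
    using col_offset_le_sum_list[of ys "s - 2"] lx eq col by simp
  show cb: "col_block ys (one_col x) = s - 1"
    using cs lx len s col by (intro col_block_eqI) (auto simp: numeral_2_eq_2)
  show "one_entry xs ys x (one_col x)"
    using rb cb col s by (simp add: one_entry_def x_def)
qed

lemma chosen_cols_in_eq: "2 \<le> s \<Longrightarrow> s \<le> n \<Longrightarrow> chosen_cols_in s = one_col ` chosen_rows_in s"
  unfolding chosen_cols_in_def chosen_rows_in_def image_image
  using chosen_rows_in_props(3) by (auto intro!: image_cong)

lemma chosen_cols_in_props:
  assumes s: "2 \<le> s" "s \<le> n" and y: "y \<in> chosen_cols_in s"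
  shows "y < sum_list xs" "col_block ys y = s - 1"
  using chosen_rows_in_props[OF s] y unfolding chosen_cols_in_eq[OF s] chosen_rows_in_def by auto

lemma card_chosen_rows_in: "card (chosen_rows_in s) = forced_ones xs ys s"
  unfolding chosen_rows_in_def by (simp add: card_image chosen_local_props(1))

lemma card_chosen_cols_in: "card (chosen_cols_in s) = forced_ones xs ys s"
  unfolding chosen_cols_in_def by (simp add: card_image chosen_local_props(1))

lemma finite_chosen_rows: "finite chosen_rows"
  by (simp add: chosen_rows_def chosen_rows_in_def chosen_local_props(4))

lemma chosen_rows_subset: "chosen_rows \<subseteq> {0..<sum_list xs}"
  using chosen_rows_in_props(1) by (auto simp: chosen_rows_def chosen_rows_in_def)

lemma chosen_cols_subset: "chosen_cols \<subseteq> {0..<sum_list xs}"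
  using chosen_cols_in_props(1) by (auto simp: chosen_cols_def)

lemma one_entry_one_col: "x \<in> chosen_rows \<Longrightarrow> one_entry xs ys x (one_col x)"
  using chosen_rows_in_props(6) by (auto simp: chosen_rows_def chosen_rows_in_def)

lemma bij_betw_one_col: "bij_betw one_col chosen_rows chosen_cols"
proof -
  have "one_col ` chosen_rows = chosen_cols"
    unfolding chosen_rows_def chosen_cols_def image_UN using chosen_cols_in_eq by simp
  moreover have "inj_on one_col chosen_rows"
  proof
    fix x x'
    assume "x \<in> chosen_rows" "x' \<in> chosen_rows" and same: "one_col x = one_col x'"
    then obtain s s' l l' where s: "2 \<le> s" "s \<le> n" "l \<in> chosen_local s" "x = row_offset xs (s - 1) + l"
      and s': "2 \<le> s'" "s' \<le> n" "l' \<in> chosen_local s'" "x' = row_offset xs (s' - 1) + l'"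
      by (auto simp: chosen_rows_def chosen_rows_in_def)
    have "s - 1 = s' - 1"
      using chosen_rows_in_props(5)[OF s(1-3)] chosen_rows_in_props(5)[OF s'(1-3)] same s s'
      by simp
    then have "s = s'"
      using s s' by simp
    then show "x = x'"
      using chosen_rows_in_props(3)[OF s(1-3)] chosen_rows_in_props(3)[OF s'(1-3)] same s s'
      by simp
  qed
  ultimately show ?thesis
    by (simp add: bij_betw_def)
qed

lemma finite_chosen_cols: "finite chosen_cols"
  using finite_chosen_rows bij_betw_one_col bij_betw_finite by blast

lemma a0_notin_chosen_rows: "a0 \<notin> chosen_rows"
proof
  assume "a0 \<in> chosen_rows"
  then obtain s l where s: "2 \<le> s" "s \<le> n" and l: "l \<in> chosen_local s"
    and a0_eq: "a0 = row_offset xs (s - 1) + l"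
    by (auto simp: chosen_rows_def chosen_rows_in_def)
  then have "s = k"
    using chosen_rows_in_props(2)[OF s l] a0 by simp
  then have "avoided_local s = a0 - row_offset xs (s - 1)"
    by (simp add: avoided_local_def)
  then have "avoided_local s = l"
    using a0_eq by simp
  then show False
    using chosen_local_props(2) l by metis
qed

lemma b0_notin_chosen_cols: "b0 \<notin> chosen_cols"
proof
  assume "b0 \<in> chosen_cols"
  then obtain s where s: "2 \<le> s" "s \<le> n" and b0_in: "b0 \<in> chosen_cols_in s"
    by (auto simp: chosen_cols_def)
  then obtain l where l: "l \<in> chosen_local s" and b0_eq: "b0 = col_offset ys (s - 1) + l"
    by (auto simp: chosen_cols_in_def)
  have "s = Suc k"
    using chosen_cols_in_props(2)[OF s b0_in] b0 s by simp
  then have "avoided_local s = b0 - col_offset ys (s - 1)"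
    by (simp add: avoided_local_def)
  then have "avoided_local s = l"
    using b0_eq by simp
  then show False
    using chosen_local_props(2) l by metis
qed

lemma row_block_chosen_row: "2 \<le> s \<Longrightarrow> s \<le> n \<Longrightarrow> x \<in> chosen_rows_in s \<Longrightarrow> row_block xs x = s"
  using chosen_rows_in_props(2) by (auto simp: chosen_rows_in_def)

lemma card_chosen_rows_from:
  "card {x \<in> chosen_rows. s \<le> row_block xs x} = (\<Sum>t | t \<in> {2..n} \<and> s \<le> t. forced_ones xs ys t)"
proof -
  have "{x \<in> chosen_rows. s \<le> row_block xs x} = (\<Union>t \<in> {t \<in> {2..n}. s \<le> t}. chosen_rows_in t)"
    using row_block_chosen_row by (auto simp: chosen_rows_def; blast)
  moreover have "card (\<Union>t \<in> {t \<in> {2..n}. s \<le> t}. chosen_rows_in t) =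
      (\<Sum>t | t \<in> {2..n} \<and> s \<le> t. card (chosen_rows_in t))"
  proof (intro card_UN_disjoint ballI impI)
    fix t t'
    assume "t \<in> {t \<in> {2..n}. s \<le> t}" "t' \<in> {t \<in> {2..n}. s \<le> t}" "t \<noteq> t'"
    then show "chosen_rows_in t \<inter> chosen_rows_in t' = {}"
      using row_block_chosen_row[of t] row_block_chosen_row[of t'] by fastforce
  qed (auto simp: chosen_rows_in_def chosen_local_props(4))
  ultimately show ?thesis
    by (simp add: card_chosen_rows_in)
qed

lemma card_chosen_cols_from:
  "card {y \<in> chosen_cols. s \<le> col_block ys y} =
    (\<Sum>t | t \<in> {2..n} \<and> s \<le> t - 1. forced_ones xs ys t)"
proof -
  have "{y \<in> chosen_cols. s \<le> col_block ys y} =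
      (\<Union>t \<in> {t \<in> {2..n}. s \<le> t - 1}. chosen_cols_in t)"
    using chosen_cols_in_props(2) by (auto simp: chosen_cols_def; blast)
  moreover have "card (\<Union>t \<in> {t \<in> {2..n}. s \<le> t - 1}. chosen_cols_in t) =
      (\<Sum>t | t \<in> {2..n} \<and> s \<le> t - 1. card (chosen_cols_in t))"
  proof (intro card_UN_disjoint ballI impI)
    fix t t'
    assume "t \<in> {t \<in> {2..n}. s \<le> t - 1}" "t' \<in> {t \<in> {2..n}. s \<le> t - 1}" "t \<noteq> t'"
    then show "chosen_cols_in t \<inter> chosen_cols_in t' = {}"
      using chosen_cols_in_props(2)[of t] chosen_cols_in_props(2)[of t'] by fastforce
  qed (auto simp: chosen_cols_in_def chosen_local_props(4))
  ultimately show ?thesis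
    by (simp add: card_chosen_cols_in)
qed

definition free_rows :: "nat set" where
  "free_rows = {0..<sum_list xs} - chosen_rows - {a0}"

definition free_cols :: "nat set" where
  "free_cols = {0..<sum_list xs} - chosen_cols - {b0}"

lemma card_free_rows_from:
  "card {x \<in> free_rows. s \<le> row_block xs x} + card {x \<in> chosen_rows. s \<le> row_block xs x}
    + (if s \<le> k then 1 else 0) = sum_list xs - row_offset xs (s - 1)"
proof -
  let ?F = "{x \<in> free_rows. s \<le> row_block xs x}" and ?C = "{x \<in> chosen_rows. s \<le> row_block xs x}"
    and ?A = "if s \<le> k then {a0} else {}"
  have "{a \<in> {0..<sum_list xs}. s \<le> row_block xs a} = ?F \<union> ?C \<union> ?A"
    using chosen_rows_subset a0 by (auto simp: free_rows_def)
  moreover have "card (?F \<union> ?C \<union> ?A) = card (?F \<union> ?C) + card ?A"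
    using finite_chosen_rows a0_notin_chosen_rows
    by (intro card_Un_disjoint) (auto simp: free_rows_def)
  moreover have "card (?F \<union> ?C) = card ?F + card ?C"
    using finite_chosen_rows by (intro card_Un_disjoint) (auto simp: free_rows_def)
  moreover have "card ?A = (if s \<le> k then 1 else 0)"
    by simp
  ultimately show ?thesis
    using card_rows_from[of xs s] by simp
qed

lemma card_free_cols_from:
  "card {y \<in> free_cols. s \<le> col_block ys y} + card {y \<in> chosen_cols. s \<le> col_block ys y}
    + (if s \<le> k then 1 else 0) = col_offset ys (s - 1)"
proof -
  let ?F = "{y \<in> free_cols. s \<le> col_block ys y}" and ?C = "{y \<in> chosen_cols. s \<le> col_block ys y}"
    and ?B = "if s \<le> k then {b0} else {}"
  have "{b \<in> {0..<sum_list ys}. s \<le> col_block ys b} = ?F \<union> ?C \<union> ?B"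
    using chosen_cols_subset b0 eq by (auto simp: free_cols_def)
  moreover have "card (?F \<union> ?C \<union> ?B) = card (?F \<union> ?C) + card ?B"
    using finite_chosen_cols b0_notin_chosen_cols by (intro card_Un_disjoint) (auto simp: free_cols_def)
  moreover have "card (?F \<union> ?C) = card ?F + card ?C"
    using finite_chosen_cols by (intro card_Un_disjoint) (auto simp: free_cols_def)
  moreover have "card ?B = (if s \<le> k then 1 else 0)"
    by simp
  ultimately show ?thesis
    using card_cols_from[of ys s] by simp
qed

lemma rows_from_le_cols_from:
  "sum_list xs - row_offset xs (s - 1) + (\<Sum>t | t \<in> {2..n} \<and> s \<le> t - 1. forced_ones xs ys t)
    \<le> col_offset ys (s - 1) + (\<Sum>t | t \<in> {2..n} \<and> s \<le> t. forced_ones xs ys t)"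
proof -
  consider "s \<le> 1" | "2 \<le> s" "s \<le> n" | "n < s"
    by linarith
  then show ?thesis
  proof cases
    case 1
    then have "{t. t \<in> {2..n} \<and> s \<le> t - 1} = {t. t \<in> {2..n} \<and> s \<le> t}"
      by auto
    then show ?thesis
      using 1 eq by simp
  next
    case 2
    then have split: "{t. t \<in> {2..n} \<and> s \<le> t} = insert s {t. t \<in> {2..n} \<and> s \<le> t - 1}"
      by auto
    have "(\<Sum>t | t \<in> {2..n} \<and> s \<le> t. forced_ones xs ys t) =
        forced_ones xs ys s + (\<Sum>t | t \<in> {2..n} \<and> s \<le> t - 1. forced_ones xs ys t)"
      unfolding split using 2 by (subst sum.insert) (auto intro: finite_subset[of _ "{2..n}"])
    then show ?thesis
      unfolding forced_ones_def by linarith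
  next
    case 3
    then have "sum_list xs - row_offset xs (s - 1) = 0"
      using row_offset_length[of xs "s - 1"] len by simp
    moreover have "(\<Sum>t | t \<in> {2..n} \<and> s \<le> t - 1. forced_ones xs ys t) \<le>
        (\<Sum>t | t \<in> {2..n} \<and> s \<le> t. forced_ones xs ys t)"
      by (intro sum_mono2) auto
    ultimately show ?thesis
      by linarith
  qed
qed

lemma hall_free_rows_cols:
  "card {x \<in> free_rows. s \<le> row_block xs x} \<le> card {y \<in> free_cols. s \<le> col_block ys y}"
  using card_free_rows_from[of s] card_free_cols_from[of s] card_chosen_rows_from[of s]
    card_chosen_cols_from[of s] rows_from_le_cols_from[of s]
  by linarith

lemma card_free_rows_eq_cols: "card free_rows = card free_cols"
  using card_free_rows_from[of 0] card_free_cols_from[of 0] eq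
    bij_betw_same_card[OF bij_betw_one_col]
  by simp

lemma card_chosen_rows: "card chosen_rows = (\<Sum>s\<in>{2..n}. forced_ones xs ys s)"
proof -
  have "{t. t \<in> {2..n} \<and> 0 \<le> t} = {2..n}"
    by auto
  then show ?thesis
    using card_chosen_rows_from[of 0] by simp
qed

definition free_matching :: "nat \<Rightarrow> nat" where
  "free_matching = (SOME \<pi>. bij_betw \<pi> free_rows free_cols \<and>
     (\<forall>x\<in>free_rows. row_block xs x \<le> col_block ys (\<pi> x)))"

lemma free_matching:
  "bij_betw free_matching free_rows free_cols"
  "\<forall>x\<in>free_rows. row_block xs x \<le> col_block ys (free_matching x)"
proof -
  have "\<exists>\<pi>. bij_betw \<pi> free_rows free_cols \<and> (\<forall>x\<in>free_rows. row_block xs x \<le> col_block ys (\<pi> x))"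
    using threshold_matching[of free_rows free_cols "row_block xs" "col_block ys"]
      card_free_rows_eq_cols hall_free_rows_cols
    by (auto simp: free_rows_def free_cols_def)
  then have "bij_betw free_matching free_rows free_cols \<and>
      (\<forall>x\<in>free_rows. row_block xs x \<le> col_block ys (free_matching x))"
    unfolding free_matching_def by (rule someI_ex)
  then show "bij_betw free_matching free_rows free_cols"
    "\<forall>x\<in>free_rows. row_block xs x \<le> col_block ys (free_matching x)"
    by blast+
qed

definition max_perm :: "nat \<Rightarrow> nat" where
  "max_perm x = (if x < sum_list xs then
     (if x = a0 then b0 else if x \<in> chosen_rows then one_col x else free_matching x) else x)"

lemma max_perm_permutes: "max_perm permutes {0..<sum_list xs}"
proof -
  have "bij_betw max_perm {a0} {b0}"
    using a0 by (simp add: max_perm_def bij_betw_def)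
  moreover have "bij_betw max_perm chosen_rows chosen_cols"
  proof -
    have "\<forall>x\<in>chosen_rows. max_perm x = one_col x"
      using chosen_rows_subset a0_notin_chosen_rows by (auto simp: max_perm_def)
    then show ?thesis
      using bij_betw_one_col bij_betw_cong by metis
  qed
  moreover have "bij_betw max_perm free_rows free_cols"
  proof -
    have "\<forall>x\<in>free_rows. max_perm x = free_matching x"
      by (auto simp: max_perm_def free_rows_def)
    then show ?thesis
      using free_matching(1) bij_betw_cong by metis
  qed
  ultimately have "bij_betw max_perm ({a0} \<union> chosen_rows \<union> free_rows)
      ({b0} \<union> chosen_cols \<union> free_cols)"
    using b0_notin_chosen_cols by (intro bij_betw_combine) (auto simp: free_cols_def)
  moreover have "{a0} \<union> chosen_rows \<union> free_rows = {0..<sum_list xs}"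
    using chosen_rows_subset a0 by (auto simp: free_rows_def)
  moreover have "{b0} \<union> chosen_cols \<union> free_cols = {0..<sum_list xs}"
    using chosen_cols_subset b0 eq by (auto simp: free_cols_def)
  ultimately show ?thesis
    by (intro bij_imp_permutes) (auto simp: max_perm_def)
qed

lemma var_entry_max_perm_iff:
  assumes x: "x < sum_list xs"
  shows "var_entry xs ys x (max_perm x) \<longleftrightarrow> x \<notin> chosen_rows"
proof -
  consider "x = a0" | "x \<in> chosen_rows" | "x \<in> free_rows"
    using x by (auto simp: free_rows_def)
  then show ?thesis
  proof cases
    case 1
    then show ?thesis
      using a0 b0 a0_notin_chosen_rows by (simp add: max_perm_def var_entry_def)
  next
    case 2
    then show ?thesis
      using x a0_notin_chosen_rows one_entry_one_col one_entry_not_var_entry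
      by (auto simp: max_perm_def)
  next
    case 3
    then show ?thesis
      using x free_matching(2) by (auto simp: max_perm_def var_entry_def free_rows_def)
  qed
qed

lemma admissible_max_perm: "admissible xs ys max_perm"
  unfolding admissible_def
proof
  fix x
  assume "x \<in> {0..<sum_list xs}"
  then show "var_entry xs ys x (max_perm x) \<or> one_entry xs ys x (max_perm x)"
    using var_entry_max_perm_iff one_entry_one_col a0_notin_chosen_rows
    by (auto simp: max_perm_def)
qed

lemma var_count_max_perm:
  "var_count xs ys max_perm + (\<Sum>s\<in>{2..n}. forced_ones xs ys s) = sum_list xs"
proof -
  have "{x \<in> {0..<sum_list xs}. var_entry xs ys x (max_perm x)} = {0..<sum_list xs} - chosen_rows"
    using var_entry_max_perm_iff by auto
  then have "var_count xs ys max_perm = sum_list xs - card chosen_rows"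
    using chosen_rows_subset finite_chosen_rows by (simp add: var_count_def card_Diff_subset)
  moreover have "card chosen_rows \<le> sum_list xs"
    using card_mono[OF _ chosen_rows_subset] by simp
  ultimately show ?thesis
    using card_chosen_rows by simp
qed

lemma appears_in_top_det_Mmat_at:
  "appears_in_top (a0, b0) (det (Mmat xs ys :: 'a::field mpol mat))"
proof -
  have "max_perm a0 = b0"
    using a0 by (simp add: max_perm_def)
  moreover have "var_count xs ys p \<le> var_count xs ys max_perm"
    if "p permutes {0..<sum_list xs}" "admissible xs ys p" for p
    using var_count_le[OF eq that, of n] var_count_max_perm by simp
  ultimately show ?thesis
    using appears_in_top_det_MmatI[OF eq max_perm_permutes admissible_max_perm _ a0(1)] a0 b0
    by (simp add: var_entry_def)
qed

end

theorem corollary6p5: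
  fixes "is" js :: "nat list" and r :: nat
  assumes "length is = r" and "length js = r"
    and "\<forall>x\<in>set is. 0 < x" and "\<forall>x\<in>set js. 0 < x"
    and "sum_list is = sum_list js"
    and "det (Mmat is js :: 'a::field mpol mat) \<noteq> 0"
    and "irreducible (det (Mmat is js :: 'a::field mpol mat))"
  shows "\<forall>k\<in>{1..r}. \<forall>a b. a < sum_list is \<and> b < sum_list js \<and>
           row_block is a = k \<and> col_block js b = k \<longrightarrow>
           appears_in_top (a, b) (det (Mmat is js :: 'a mpol mat))"
proof (intro ballI allI impI)
  fix k a b
  assume "a < sum_list is \<and> b < sum_list js \<and> row_block is a = k \<and> col_block js b = k"
  moreover have "sum_list is - row_offset is (s - 1) < col_offset js (s - 2)"
    if "2 \<le> s" "s \<le> r" for s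
    using lower_rows_lt_cols_if_irreducible[OF assms that] .
  ultimately show "appears_in_top (a, b) (det (Mmat is js :: 'a mpol mat))"
    using appears_in_top_det_Mmat_at[OF assms(1-5)] by blast
qed
end
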